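(* Let $H=([n],E)$ be a hypergraph having at least one edge of cardinality greater than $2$, and assume $H$ has two disjoint edges. Then $\Delta_H$ is not Cohen–Macaulay over any field.
   Context: A hypergraph $H=([n],E)$ has vertex set $[n]$ and edge set $E$, a collection of nonempty subsets of $[n]$; standing assumptions: every vertex lies in some edge, no edge has cardinality 1, no edge is properly contained in another. The coloring complex $\Delta_H$ is the abstract simplicial complex whose vertices are the nonempty proper subsets of $[n]$ and whose faces are the chains $\emptyset\neq A_1\subsetneq\cdots\subsetneq A_l\neq[n]$ ($l\ge0$) such that, with $A_0=\emptyset$, $A_{l+1}=[n]$, some difference $A_i\setminus A_{i-1}$ ($1\le i\le l+1$) contains an edge of $H$. *)

theory Defs
  imports Main
begin

text \<open>An abstract simplicial complex is given by its set of faces K (a set of finite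
vertex sets, closed under subsets, containing the empty face).  To orient faces we
fix an injection of the vertex set into nat (any choice gives isomorphic homology).\<close>

definition vkey :: "'v set set \<Rightarrow> 'v \<Rightarrow> nat" where
  "vkey K = (SOME f. inj_on f (\<Union>K))"

definition bsign :: "'v set set \<Rightarrow> 'v set \<Rightarrow> 'v \<Rightarrow> 'k::field" where
  "bsign K \<sigma> v = (if even (card {w\<in>\<sigma>. vkey K w < vkey K v}) then 1 else -1)"

text \<open>A q-chain: a k-valued function supported on faces of cardinality q
(i.e. of dimension q-1; q = 0 is the empty face, giving reduced homology).\<close>
definition is_chain :: "'v set set \<Rightarrow> nat \<Rightarrow> ('v set \<Rightarrow> 'k::field) \<Rightarrow> bool" where
  "is_chain K q c = (\<forall>\<sigma>. c \<sigma> \<noteq> 0 \<longrightarrow> \<sigma> \<in> K \<and> card \<sigma> = q)"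

definition bdry :: "'v set set \<Rightarrow> ('v set \<Rightarrow> 'k::field) \<Rightarrow> 'v set \<Rightarrow> 'k" where
  "bdry K c \<tau> = (\<Sum>v\<in>(\<Union>K) - \<tau>. bsign K (insert v \<tau>) v * c (insert v \<tau>))"

definition red_homology_vanishes :: "'k::field itself \<Rightarrow> 'v set set \<Rightarrow> nat \<Rightarrow> bool" where
  "red_homology_vanishes _ K q =
     (\<forall>c::'v set \<Rightarrow> 'k. is_chain K q c \<and> bdry K c = (\<lambda>_. 0) \<longrightarrow>
        (\<exists>b::'v set \<Rightarrow> 'k. is_chain K (Suc q) b \<and> bdry K b = c))"

definition link :: "'v set set \<Rightarrow> 'v set \<Rightarrow> 'v set set" where
  "link K F = {G \<in> K. G \<inter> F = {} \<and> G \<union> F \<in> K}"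

text \<open>Cohen-Macaulay over k (Reisner's criterion): for every face F, the reduced
homology of lk F vanishes below its dimension.  With m = max cardinality of a face of
lk F (so dim lk F = m-1), the condition H~_i = 0 for -1 \<le> i < m-1 reads, with q = i+1,
vanishing for all q < m.\<close>
definition cohen_macaulay_over :: "'k::field itself \<Rightarrow> 'v set set \<Rightarrow> bool" where
  "cohen_macaulay_over k K =
     (\<forall>F\<in>K. \<forall>q < Max (card ` link K F). red_homology_vanishes k (link K F) q)"

definition hypergraph :: "nat \<Rightarrow> nat set set \<Rightarrow> bool" where
  "hypergraph n E =
     ((\<forall>e\<in>E. e \<noteq> {} \<and> e \<subseteq> {1..n}) \<and>
      (\<forall>v\<in>{1..n}. \<exists>e\<in>E. v \<in> e) \<and>
      (\<forall>e\<in>E. card e \<noteq> 1) \<and>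
      (\<forall>e\<in>E. \<forall>e'\<in>E. \<not> e \<subset> e'))"

text \<open>Faces of Delta_H: chains A_1 \<subset> ... \<subset> A_l of nonempty proper subsets of [n],
represented as the set {A_1,...,A_l}, such that for some consecutive pair A \<subset> B in
{} \<union> chain \<union> {[n]} the difference B - A contains an edge.\<close>
definition coloring_complex :: "nat \<Rightarrow> nat set set \<Rightarrow> nat set set set" where
  "coloring_complex n E =
     {C. C \<subseteq> {A. A \<noteq> {} \<and> A \<subset> {1..n}} \<and>
         (\<forall>A\<in>C. \<forall>B\<in>C. A \<subseteq> B \<or> B \<subseteq> A) \<and>
         (\<exists>A\<in>insert {} (insert {1..n} C). \<exists>B\<in>insert {} (insert {1..n} C).
            A \<subset> B \<and> (\<forall>D\<in>C. \<not> (A \<subset> D \<and> D \<subset> B)) \<and>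
            (\<exists>e\<in>E. e \<subseteq> B - A))}"

end

theory Submission
  imports Defs
begin

text \<open>
  If a face has a link of dimension at least one whose vertices split into two nonempty parts
  with no link edge between them, the reduced homology of the link in degree zero is nonzero,
  so Reisner's criterion fails.

  For \<open>R \<subseteq> [n]\<close> adjoin to a chain \<open>R \<subset> X\<^sub>1 \<subset> \<dots> \<subset> [n]\<close> the initial segments of \<open>R\<close>. This refines
  the chain below \<open>R\<close> into one-element steps, which contain no edge, so the refined chain is a
  face of \<open>\<Delta>\<^sub>H\<close> exactly when a step of \<open>R \<subset> X\<^sub>1 \<subset> \<dots> \<subset> [n]\<close> contains an edge.
  If \<open>g, h\<close> are disjoint edges with \<open>|h| \<ge> 3\<close>, let \<open>R = [n] - (g \<union> h)\<close> and \<open>P = R \<union> g\<close>. In the link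
  of the initial segments of \<open>R\<close> together with \<open>P\<close>, an edge from \<open>y \<subset> P\<close> to \<open>z \<supset> P\<close> would make
  \<open>R \<subset> y \<subset> P \<subset> z \<subset> [n]\<close> a face, although each of its steps is a proper part of \<open>g\<close> or \<open>h\<close> and
  edges form an antichain; as \<open>|h| \<ge> 3\<close> the link has an edge above \<open>P\<close>.
  Otherwise an edge \<open>e\<close> with \<open>|e| \<ge> 3\<close> meets a two-element edge \<open>{a, b}\<close> with \<open>a \<in> e\<close>, \<open>b \<notin> e\<close>;
  for \<open>R = [n] - (e \<union> {b})\<close> the vertex \<open>R \<union> e\<close> is isolated in the link of the initial segments
  of \<open>R\<close>, which again has an edge.
\<close>

section \<open>Reduced homology in degree zero\<close>

lemma vkey_inj: "finite (\<Union>K) \<Longrightarrow> inj_on (vkey K) (\<Union>K)"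
proof -
  assume "finite (\<Union>K)"
  then obtain f :: "_ \<Rightarrow> nat" and m where "inj_on f (\<Union>K)"
    using finite_imp_inj_to_nat_seg by blast
  then show ?thesis unfolding vkey_def by (rule someI[where P="\<lambda>f. inj_on f (\<Union>K)"])
qed

lemma bsign_singleton: "bsign K {v} v = 1"
proof -
  have no_smaller: "{w \<in> {v}. vkey K w < vkey K v} = {}" by auto
  show ?thesis unfolding bsign_def no_smaller by simp
qed

lemma bsign_pair_antisym:
  assumes "x \<noteq> w" "x \<in> \<Union>K" "w \<in> \<Union>K" "finite (\<Union>K)"
  shows "bsign K {x, w} x = - bsign K {x, w} w"
proof -
  have "vkey K x \<noteq> vkey K w"
    using inj_onD[OF vkey_inj[OF assms(4)]] assms(1-3) by blast
  then consider "vkey K x < vkey K w" | "vkey K w < vkey K x" by linarith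
  then show ?thesis
  proof cases
    case 1
    then have below_x: "{u \<in> {x, w}. vkey K u < vkey K x} = {}"
      and below_w: "{u \<in> {x, w}. vkey K u < vkey K w} = {x}" using assms(1) by auto
    show ?thesis unfolding bsign_def below_x below_w by simp
  next
    case 2
    then have below_x: "{u \<in> {x, w}. vkey K u < vkey K x} = {w}"
      and below_w: "{u \<in> {x, w}. vkey K u < vkey K w} = {}" using assms(1) by auto
    show ?thesis unfolding bsign_def below_x below_w by simp
  qed
qed

text \<open>Pairing \<open>f x w\<close> with \<open>f w x\<close> inductively, rather than from \<open>2 S = 0\<close>, works in characteristic 2.\<close>

lemma sum_offdiag_antisym_eq_0:
  fixes f :: "'a \<Rightarrow> 'a \<Rightarrow> 'b::ab_group_add"
  assumes "finite V" and "\<And>x w. x \<in> V \<Longrightarrow> w \<in> V \<Longrightarrow> x \<noteq> w \<Longrightarrow> f w x = - f x w"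
  shows "(\<Sum>x\<in>V. \<Sum>w\<in>V - {x}. f x w) = 0"
  using assms
proof (induction V rule: finite_induct)
  case empty
  then show ?case by simp
next
  case (insert y V)
  have "(\<Sum>x\<in>insert y V. \<Sum>w\<in>insert y V - {x}. f x w)
      = (\<Sum>w\<in>V. f y w) + (\<Sum>x\<in>V. f x y + (\<Sum>w\<in>V - {x}. f x w))"
    using insert.hyps by (auto simp: insert_Diff_if intro!: sum.cong)
  also have "\<dots> = (\<Sum>w\<in>V. f y w + f w y) + (\<Sum>x\<in>V. \<Sum>w\<in>V - {x}. f x w)"
    by (simp add: sum.distrib add.assoc)
  also have "(\<Sum>w\<in>V. f y w + f w y) = 0"
    using insert.hyps insert.prems by (intro sum.neutral) force
  also have "(\<Sum>x\<in>V. \<Sum>w\<in>V - {x}. f x w) = 0"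
    using insert.IH insert.prems by blast
  finally show ?case by simp
qed

lemma sum_bdry_component_eq_0:
  fixes b :: "'v set \<Rightarrow> 'k::field"
  assumes fin: "finite (\<Union>K)" and chain: "is_chain K 2 b"
    and closed: "\<And>y z. {y, z} \<in> K \<Longrightarrow> y \<noteq> z \<Longrightarrow> y \<in> C \<Longrightarrow> z \<in> C"
  shows "(\<Sum>x\<in>\<Union>K \<inter> C. bdry K b {x}) = 0"
proof -
  let ?V = "\<Union>K \<inter> C"
  define f where "f x w = bsign K {x, w} w * b {x, w}" for x w
  have "bdry K b {x} = (\<Sum>w\<in>?V - {x}. f x w)" if x: "x \<in> ?V" for x
  proof -
    have "bdry K b {x} = (\<Sum>w\<in>\<Union>K - {x}. f x w)"
      unfolding bdry_def f_def by (simp add: insert_commute)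
    also have "\<dots> = (\<Sum>w\<in>?V - {x}. f x w)"
    proof (rule sum.mono_neutral_right)
      show "\<forall>w\<in>\<Union>K - {x} - (?V - {x}). f x w = 0"
      proof
        fix w assume w: "w \<in> \<Union>K - {x} - (?V - {x})"
        have "b {x, w} = 0"
          using chain closed[of x w] x w unfolding is_chain_def by blast
        then show "f x w = 0" by (simp add: f_def)
      qed
    qed (use fin in auto)
    finally show ?thesis .
  qed
  then have "(\<Sum>x\<in>?V. bdry K b {x}) = (\<Sum>x\<in>?V. \<Sum>w\<in>?V - {x}. f x w)"
    by (rule sum.cong[OF refl])
  also have "\<dots> = 0"
  proof (rule sum_offdiag_antisym_eq_0)
    fix x w assume "x \<in> ?V" "w \<in> ?V" "x \<noteq> w"
    then have antisym: "bsign K {x, w} x = - bsign K {x, w} w"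
      using fin by (intro bsign_pair_antisym) auto
    have "f w x = bsign K {x, w} x * b {x, w}" by (simp add: f_def insert_commute)
    also have "\<dots> = - f x w" unfolding antisym f_def by simp
    finally show "f w x = - f x w" .
  qed (use fin in auto)
  finally show ?thesis .
qed

text \<open>The 0-cycle \<open>{a} - {b}\<close> is no boundary: every boundary has coefficient sum zero on \<open>C\<close>.\<close>

lemma red_homology_not_vanishes_if_disconnected:
  fixes K :: "'v set set"
  assumes fin: "finite (\<Union>K)" and a: "{a} \<in> K" "a \<in> C" and b: "{b} \<in> K" "b \<notin> C"
    and closed: "\<And>y z. {y, z} \<in> K \<Longrightarrow> y \<noteq> z \<Longrightarrow> y \<in> C \<Longrightarrow> z \<in> C"
  shows "\<not> red_homology_vanishes TYPE('k::field) K 1"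
proof
  assume vanishes: "red_homology_vanishes TYPE('k) K 1"
  have ab: "a \<noteq> b" using a b by blast
  define c :: "'v set \<Rightarrow> 'k" where "c \<sigma> = (if \<sigma> = {a} then 1 else if \<sigma> = {b} then -1 else 0)" for \<sigma>
  have chain: "is_chain K 1 c" unfolding is_chain_def c_def using a b by auto
  have cycle: "bdry K c = (\<lambda>_. 0)"
  proof
    fix \<tau> :: "'v set"
    show "bdry K c \<tau> = 0"
    proof (cases "\<tau> = {}")
      case True
      have "bdry K c \<tau> = (\<Sum>v\<in>\<Union>K. c {v})"
        unfolding bdry_def True by (simp add: bsign_singleton)
      also have "\<dots> = (\<Sum>v\<in>{a, b}. c {v})"
        by (rule sum.mono_neutral_right[OF fin]) (use a b in \<open>auto simp: c_def\<close>)
      also have "\<dots> = 0" using ab by (simp add: c_def)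
      finally show ?thesis .
    next
      case False
      then have "insert v \<tau> \<noteq> {u}" if "v \<notin> \<tau>" for u v
        using that by blast
      then have "c (insert v \<tau>) = 0" if "v \<notin> \<tau>" for v
        using that unfolding c_def by auto
      then show ?thesis unfolding bdry_def by simp
    qed
  qed
  obtain \<beta> :: "'v set \<Rightarrow> 'k" where "is_chain K 2 \<beta>" and "bdry K \<beta> = c"
    using vanishes chain cycle unfolding red_homology_vanishes_def by (metis numeral_2_eq_2 One_nat_def)
  moreover have "(\<Sum>x\<in>\<Union>K \<inter> C. bdry K \<beta> {x}) = 0"
    using \<open>is_chain K 2 \<beta>\<close> by (rule sum_bdry_component_eq_0[OF fin]) (rule closed)
  ultimately have "(\<Sum>x\<in>\<Union>K \<inter> C. c {x}) = 0" by simp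
  moreover have "(\<Sum>x\<in>\<Union>K \<inter> C. c {x}) = (\<Sum>x\<in>{a}. c {x})"
    by (rule sum.mono_neutral_right) (use fin a b in \<open>auto simp: c_def\<close>)
  ultimately show False by (simp add: c_def)
qed

lemma not_cohen_macaulay_if_link_disconnected:
  assumes F: "F \<in> K" and fin: "finite (\<Union>(link K F))"
    and a: "{a} \<in> link K F" "a \<in> C" and b: "{b} \<in> link K F" "b \<notin> C"
    and closed: "\<And>y z. {y, z} \<in> link K F \<Longrightarrow> y \<noteq> z \<Longrightarrow> y \<in> C \<Longrightarrow> z \<in> C"
    and G: "G \<in> link K F" "card G = 2"
  shows "\<not> cohen_macaulay_over TYPE('k::field) K"
proof
  assume cm: "cohen_macaulay_over TYPE('k) K"
  have "finite (card ` link K F)"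
    using finite_subset[OF _ finite_Pow_iff[THEN iffD2, OF fin]] by blast
  moreover have "2 \<in> card ` link K F" using G by force
  ultimately have "2 \<le> Max (card ` link K F)" by (rule Max_ge)
  then have "1 < Max (card ` link K F)" by simp
  then have "red_homology_vanishes TYPE('k) (link K F) 1"
    using cm F unfolding cohen_macaulay_over_def by blast
  moreover have "\<not> red_homology_vanishes TYPE('k) (link K F) 1"
    by (rule red_homology_not_vanishes_if_disconnected[OF fin a b]) (rule closed)
  ultimately show False by blast
qed

section \<open>Chains and initial segments\<close>

lemma sorted_wrt_less_comparable:
  fixes xs :: "'a::order list"
  shows "sorted_wrt (<) xs \<Longrightarrow> a \<in> set xs \<Longrightarrow> b \<in> set xs \<Longrightarrow> a \<le> b \<or> b \<le> a"
  by (induction xs) auto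

lemma in_set_zip_tl_iff:
  fixes xs :: "'a::order list"
  assumes "sorted_wrt (<) xs"
  shows "(a, b) \<in> set (zip xs (tl xs)) \<longleftrightarrow>
    a \<in> set xs \<and> b \<in> set xs \<and> a < b \<and> (\<forall>d\<in>set xs. \<not> (a < d \<and> d < b))"
  using assms
proof (induction xs)
  case Nil
  then show ?case by simp
next
  case (Cons x ys)
  note IH = Cons.IH and sorted = Cons.prems
  show ?case
  proof (cases ys)
    case Nil
    then show ?thesis by auto
  next
    case (Cons y zs)
    have "sorted_wrt (<) ys" and x_less: "\<forall>u\<in>set ys. x < u" and y_less: "\<forall>u\<in>set zs. y < u"
      using sorted \<open>ys = y # zs\<close> by auto
    have zip: "set (zip (x # ys) (tl (x # ys))) = insert (x, y) (set (zip ys (tl ys)))"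
      by (simp add: \<open>ys = y # zs\<close>)
    show ?thesis
    proof
      assume "(a, b) \<in> set (zip (x # ys) (tl (x # ys)))"
      then consider "a = x" "b = y" | "(a, b) \<in> set (zip ys (tl ys))" using zip by blast
      then show "a \<in> set (x # ys) \<and> b \<in> set (x # ys) \<and> a < b \<and> (\<forall>d\<in>set (x # ys). \<not> (a < d \<and> d < b))"
      proof cases
        case 1
        then show ?thesis using x_less y_less \<open>ys = y # zs\<close> by (auto dest: less_asym)
      next
        case 2
        then show ?thesis using IH \<open>sorted_wrt (<) ys\<close> x_less by (auto dest: less_asym)
      qed
    next
      assume rhs: "a \<in> set (x # ys) \<and> b \<in> set (x # ys) \<and> a < b \<and> (\<forall>d\<in>set (x # ys). \<not> (a < d \<and> d < b))"
      show "(a, b) \<in> set (zip (x # ys) (tl (x # ys)))"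
      proof (cases "a = x")
        case True
        then have "b = y" using rhs x_less y_less \<open>ys = y # zs\<close> by auto
        then show ?thesis using True zip by blast
      next
        case False
        then have "a \<in> set ys" and "b \<in> set ys" using rhs x_less by (auto dest: less_asym)
        then have "(a, b) \<in> set (zip ys (tl ys))" using IH \<open>sorted_wrt (<) ys\<close> rhs by auto
        then show ?thesis using zip by blast
      qed
    qed
  qed
qed

text \<open>
  Adjoining \<open>initial_segments R\<close> to a chain above \<open>R\<close> leaves only one-element steps below \<open>R\<close>.
\<close>

definition initial_segments :: "'a::linorder set \<Rightarrow> 'a set set" where
  "initial_segments R = (\<lambda>t. {x \<in> R. x \<le> t}) ` R"

lemma initial_segmentsD: "X \<in> initial_segments R \<Longrightarrow> X \<noteq> {} \<and> X \<subseteq> R"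
  unfolding initial_segments_def by auto

lemma initial_segment_in_initial_segments: "t \<in> R \<Longrightarrow> {x \<in> R. x \<le> t} \<in> initial_segments R"
  unfolding initial_segments_def by (rule imageI)

lemma initial_segments_comparable:
  assumes "X \<in> initial_segments R" and "Y \<in> initial_segments R"
  shows "X \<subseteq> Y \<or> Y \<subseteq> X"
proof -
  obtain s t where "X = {x \<in> R. x \<le> s}" and "Y = {x \<in> R. x \<le> t}"
    using assms unfolding initial_segments_def by blast
  then show ?thesis by (cases "s \<le> t") auto
qed

lemma self_in_initial_segments: "finite R \<Longrightarrow> R \<noteq> {} \<Longrightarrow> R \<in> initial_segments R"
  unfolding initial_segments_def by (rule image_eqI[where x = "Max R"]) auto

lemma initial_segments_gap_subsingleton:
  assumes A: "A \<in> insert {} (initial_segments R)" and B: "B \<in> initial_segments R"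
    and gap: "\<forall>D\<in>initial_segments R. \<not> (A \<subset> D \<and> D \<subset> B)"
    and u: "u \<in> B - A" and w: "w \<in> B - A"
  shows "u = w"
proof (rule ccontr)
  assume "u \<noteq> w"
  then obtain u' w' where u': "u' \<in> B - A" and w': "w' \<in> B - A" and "u' < w'"
    using u w by (metis linorder_neq_iff)
  define I where "I = {x \<in> R. x \<le> u'}"
  obtain t where "t \<in> R" and B_eq: "B = {x \<in> R. x \<le> t}"
    using B unfolding initial_segments_def by blast
  then have "u' \<in> R" and "u' \<le> t" using u' by auto
  then have "I \<in> initial_segments R" and "I \<subseteq> B"
    unfolding I_def B_eq by (auto intro: initial_segment_in_initial_segments)
  moreover have "w' \<in> B - I" using w' \<open>u' < w'\<close> unfolding I_def by auto
  ultimately have "I \<in> initial_segments R" and "I \<subset> B" by blast+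
  moreover have "A \<subset> I"
  proof (cases "A = {}")
    case False
    then obtain s where "A = {x \<in> R. x \<le> s}"
      using A unfolding initial_segments_def by blast
    with u' B_eq have "s < u'" and "u' \<in> R" by auto
    with \<open>A = {x \<in> R. x \<le> s}\<close> have "A \<subseteq> I" and "u' \<in> I - A"
      unfolding I_def by auto
    then show ?thesis by blast
  qed (use u' B_eq I_def in auto)
  ultimately show False using gap by blast
qed

lemma superset_if_comparable_with_initial_segments:
  assumes fin: "finite R" and S: "S \<noteq> {}" "S \<notin> initial_segments R"
    and comparable: "\<forall>X\<in>initial_segments R. S \<subseteq> X \<or> X \<subseteq> S"
  shows "R \<subseteq> S"
proof (rule ccontr)
  assume "\<not> R \<subseteq> S"
  define t where "t = Min (R - S)"
  have t: "t \<in> R" "t \<notin> S"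
    using Min_in[of "R - S"] fin \<open>\<not> R \<subseteq> S\<close> unfolding t_def by auto
  have below_t: "x \<in> S" if "x \<in> R" "x < t" for x
  proof (rule ccontr)
    assume "x \<notin> S"
    then have "t \<le> x" using Min_le[of "R - S" x] fin \<open>x \<in> R\<close> unfolding t_def by blast
    then show False using \<open>x < t\<close> by simp
  qed
  have "{x \<in> R. x \<le> t} \<in> initial_segments R"
    using t(1) by (rule initial_segment_in_initial_segments)
  with comparable have "S \<subseteq> {x \<in> R. x \<le> t} \<or> {x \<in> R. x \<le> t} \<subseteq> S" by (rule bspec)
  moreover have "t \<in> {x \<in> R. x \<le> t}" using t(1) by simp
  ultimately have below: "S \<subseteq> {x \<in> R. x \<le> t}" using t(2) by blast
  have S_eq: "S = {x \<in> R. x < t}"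
  proof
    show "S \<subseteq> {x \<in> R. x < t}"
    proof
      fix x assume "x \<in> S"
      with below t(2) have "x \<in> R" "x \<le> t" "x \<noteq> t" by auto
      then show "x \<in> {x \<in> R. x < t}" by simp
    qed
    show "{x \<in> R. x < t} \<subseteq> S" using below_t by blast
  qed
  define s where "s = Max S"
  have "finite S" using fin S_eq by simp
  then have "s \<in> S" and le_s: "\<And>x. x \<in> S \<Longrightarrow> x \<le> s"
    using S unfolding s_def by auto
  then have "s \<in> R" and "s < t" using S_eq by auto
  have "S = {x \<in> R. x \<le> s}"
  proof
    show "S \<subseteq> {x \<in> R. x \<le> s}" using le_s S_eq by auto
    show "{x \<in> R. x \<le> s} \<subseteq> S"
    proof
      fix x assume "x \<in> {x \<in> R. x \<le> s}"
      then have "x \<in> R" "x < t" using \<open>s < t\<close> by auto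
      then show "x \<in> S" by (rule below_t)
    qed
  qed
  then have "S \<in> initial_segments R"
    using \<open>s \<in> R\<close> by (simp add: initial_segment_in_initial_segments)
  then show False using S by blast
qed

lemma psubset_witnessI: "A \<subseteq> B \<Longrightarrow> x \<in> B \<Longrightarrow> x \<notin> A \<Longrightarrow> A \<subset> B"
  by blast

section \<open>Hypergraphs and the coloring complex\<close>

lemma hypergraph_edge_subset: "hypergraph n E \<Longrightarrow> e \<in> E \<Longrightarrow> e \<subseteq> {1..n}"
  unfolding hypergraph_def by blast

lemma hypergraph_edge_two_elements:
  assumes "hypergraph n E" and "e \<in> E"
  obtains x y where "x \<in> e" "y \<in> e" "x \<noteq> y"
proof -
  have "e \<noteq> {}" and "card e \<noteq> 1" using assms unfolding hypergraph_def by auto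
  then obtain x where "x \<in> e" and "e \<noteq> {x}" by fastforce
  then obtain y where "y \<in> e" "y \<noteq> x" by blast
  with \<open>x \<in> e\<close> show thesis using that by blast
qed

lemma hypergraph_card_edge_ge_2:
  assumes "hypergraph n E" and "e \<in> E"
  shows "2 \<le> card e"
proof -
  obtain x y where "x \<in> e" "y \<in> e" "x \<noteq> y" using hypergraph_edge_two_elements[OF assms] .
  moreover have "finite e" using hypergraph_edge_subset[OF assms] finite_subset by blast
  ultimately show ?thesis using card_mono[of e "{x, y}"] by simp
qed

lemma hypergraph_edge_not_psubset:
  "hypergraph n E \<Longrightarrow> e \<in> E \<Longrightarrow> e' \<in> E \<Longrightarrow> \<not> e \<subset> e'"
  unfolding hypergraph_def by blast

lemma no_edge_in_refinement_of_edge: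
  assumes hyp: "hypergraph n E" and edge: "B - A \<in> E" and "A \<subset> M" "M \<subset> B" and e: "e \<in> E"
  shows "\<not> e \<subseteq> M - A" and "\<not> e \<subseteq> B - M"
proof -
  obtain p q where "p \<in> B - M" and "q \<in> M - A" using assms(3,4) by blast
  then have "M - A \<subset> B - A" and "B - M \<subset> B - A" using assms(3,4) by auto
  then show "\<not> e \<subseteq> M - A" and "\<not> e \<subseteq> B - M"
    using hypergraph_edge_not_psubset[OF hyp e edge] by (meson subset_psubset_trans)+
qed

lemma obtain_two_elements_besides:
  assumes "2 < card A" and "a \<in> A"
  obtains x y where "x \<in> A" "y \<in> A" "x \<noteq> a" "y \<noteq> a" "x \<noteq> y"
proof -
  have "2 \<le> card (A - {a})" using assms by simp
  then obtain T where "T \<subseteq> A - {a}" and "card T = 2" by (meson obtain_subset_with_card_n)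
  then obtain x y where "T = {x, y}" and "x \<noteq> y" by (meson card_2_iff)
  then show thesis using that \<open>T \<subseteq> A - {a}\<close> by blast
qed

lemma coloring_complexD:
  assumes "C \<in> coloring_complex n E"
  shows "C \<subseteq> {A. A \<noteq> {} \<and> A \<subset> {1..n}}" and "\<forall>A\<in>C. \<forall>B\<in>C. A \<subseteq> B \<or> B \<subseteq> A"
proof -
  note face = assms[unfolded coloring_complex_def mem_Collect_eq]
  show "C \<subseteq> {A. A \<noteq> {} \<and> A \<subset> {1..n}}" using face by (rule conjunct1)
  show "\<forall>A\<in>C. \<forall>B\<in>C. A \<subseteq> B \<or> B \<subseteq> A" using face[THEN conjunct2] by (rule conjunct1)
qed

lemma coloring_complexE:
  assumes "C \<in> coloring_complex n E"
  obtains A B e where "A \<in> insert {} (insert {1..n} C)" and "B \<in> insert {} (insert {1..n} C)"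
    and "A \<subset> B" and "\<forall>D\<in>C. \<not> (A \<subset> D \<and> D \<subset> B)" and "e \<in> E" and "e \<subseteq> B - A"
  using assms[unfolded coloring_complex_def mem_Collect_eq, THEN conjunct2, THEN conjunct2]
  by (elim bexE conjE) (rule that)

lemma coloring_complexI:
  assumes "C \<subseteq> {A. A \<noteq> {} \<and> A \<subset> {1..n}}" and "\<forall>A\<in>C. \<forall>B\<in>C. A \<subseteq> B \<or> B \<subseteq> A"
    and "A \<in> insert {} (insert {1..n} C)" and "B \<in> insert {} (insert {1..n} C)"
    and "A \<subset> B" and "\<forall>D\<in>C. \<not> (A \<subset> D \<and> D \<subset> B)" and "e \<in> E" and "e \<subseteq> B - A"
  shows "C \<in> coloring_complex n E"
proof -
  have "A \<subset> B \<and> (\<forall>D\<in>C. \<not> (A \<subset> D \<and> D \<subset> B)) \<and> (\<exists>e\<in>E. e \<subseteq> B - A)"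
    using assms(5-8) by blast
  then have "\<exists>A\<in>insert {} (insert {1..n} C). \<exists>B\<in>insert {} (insert {1..n} C).
      A \<subset> B \<and> (\<forall>D\<in>C. \<not> (A \<subset> D \<and> D \<subset> B)) \<and> (\<exists>e\<in>E. e \<subseteq> B - A)"
    using assms(3,4) by (intro bexI)
  then show ?thesis unfolding coloring_complex_def mem_Collect_eq by (intro conjI assms(1,2))
qed

text \<open>The gap \<open>A \<subset> B\<close> witnessing a face widens, in a subchain, to the nearest members around it.\<close>

lemma coloring_complex_subset_closed:
  assumes C: "C \<in> coloring_complex n E" and sub: "C' \<subseteq> C"
  shows "C' \<in> coloring_complex n E"
proof -
  let ?U = "{1..n::nat}"
  have proper: "C \<subseteq> {A. A \<noteq> {} \<and> A \<subset> ?U}" and chain: "\<forall>A\<in>C. \<forall>B\<in>C. A \<subseteq> B \<or> B \<subseteq> A"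
    using coloring_complexD[OF C] by blast+
  obtain A B e where A: "A \<in> insert {} (insert ?U C)" and B: "B \<in> insert {} (insert ?U C)"
    and "A \<subset> B" and gap: "\<forall>D\<in>C. \<not> (A \<subset> D \<and> D \<subset> B)" and e: "e \<in> E" "e \<subseteq> B - A"
    using coloring_complexE[OF C] by blast
  have comparable: "D \<subseteq> X \<or> X \<subseteq> D" if "X \<in> insert {} (insert ?U C)" "D \<in> C" for X D
    using that chain proper by blast
  let ?C' = "insert {} (insert ?U C')"
  have "?C' \<subseteq> Pow ?U" using sub proper by blast
  then have "finite ?C'" by (rule finite_subset) simp
  have chain': "X \<subseteq> Y \<or> Y \<subseteq> X" if "X \<in> ?C'" "Y \<in> ?C'" for X Y
    using that sub chain proper by blast
  have finite_chain: "finite \<B>" "subset.chain UNIV \<B>" if "\<B> \<subseteq> ?C'" for \<B>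
  proof -
    show "finite \<B>" using that \<open>finite ?C'\<close> by (rule finite_subset)
    show "subset.chain UNIV \<B>"
      unfolding subset_chain_def using that by (intro conjI ballI subset_UNIV chain') auto
  qed
  define A' where "A' = \<Union>{D \<in> insert {} C'. D \<subseteq> A}"
  define B' where "B' = \<Inter>{D \<in> insert ?U C'. B \<subseteq> D}"
  have "A' \<in> {D \<in> insert {} C'. D \<subseteq> A}"
    unfolding A'_def by (intro Union_in_chain[of _ UNIV] finite_chain) auto
  then have A': "A' \<in> insert {} C'" "A' \<subseteq> A" by auto
  have "B \<subseteq> ?U" using B proper by blast
  then have "B' \<in> {D \<in> insert ?U C'. B \<subseteq> D}"
    unfolding B'_def by (intro Inter_in_chain[of _ UNIV] finite_chain) auto
  then have B': "B' \<in> insert ?U C'" "B \<subseteq> B'" by auto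
  have gap': "\<forall>D\<in>C'. \<not> (A' \<subset> D \<and> D \<subset> B')"
  proof (intro ballI notI)
    fix D assume "D \<in> C'" and "A' \<subset> D \<and> D \<subset> B'"
    then have "\<not> D \<subseteq> A" and "\<not> B \<subseteq> D" unfolding A'_def B'_def by blast+
    then have "A \<subset> D" and "D \<subset> B" using comparable A B \<open>D \<in> C'\<close> sub by blast+
    then show False using gap \<open>D \<in> C'\<close> sub by blast
  qed
  have "A' \<subset> B'" and "e \<subseteq> B' - A'" using A' B' \<open>A \<subset> B\<close> e by blast+
  moreover have "A' \<in> insert {} (insert ?U C')" and "B' \<in> insert {} (insert ?U C')"
    using A'(1) B'(1) by blast+
  moreover have "C' \<subseteq> {A. A \<noteq> {} \<and> A \<subset> ?U}" and "\<forall>A\<in>C'. \<forall>B\<in>C'. A \<subseteq> B \<or> B \<subseteq> A"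
    using sub proper chain by blast+
  ultimately show ?thesis by (intro coloring_complexI[OF _ _ _ _ _ gap' e(1)])
qed

lemma link_coloring_complexI:
  "G \<union> F \<in> coloring_complex n E \<Longrightarrow> G \<inter> F = {} \<Longrightarrow> G \<in> link (coloring_complex n E) F"
  unfolding link_def using coloring_complex_subset_closed by blast

lemma finite_Union_link_coloring_complex: "finite (\<Union>(link (coloring_complex n E) F))"
proof (rule finite_subset)
  show "\<Union>(link (coloring_complex n E) F) \<subseteq> Pow {1..n}"
    unfolding link_def using coloring_complexD(1) by blast
qed simp

lemma sorted_wrt_psubset_chainD:
  assumes "sorted_wrt (\<subset>) (R # Xs @ [U])"
  shows "sorted_wrt (\<subset>) Xs" and "\<And>X. X \<in> set Xs \<Longrightarrow> R \<subset> X \<and> X \<subset> U" and "R \<subset> U"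
  using assms by (auto simp: sorted_wrt_append)

lemma refined_chain_in_coloring_complexI:
  fixes R :: "nat set"
  assumes chain: "successively (\<subset>) (R # Xs @ [{1..n}])"
    and step: "(A, B) \<in> set (zip (R # Xs @ [{1..n}]) (Xs @ [{1..n}]))"
    and e: "e \<in> E" "e \<subseteq> B - A"
  shows "initial_segments R \<union> set Xs \<in> coloring_complex n E"
proof -
  let ?U = "{1..n::nat}" and ?cs = "R # Xs @ [{1..n}]" and ?C = "initial_segments R \<union> set Xs"
  have sorted: "sorted_wrt (\<subset>) ?cs" using chain by (simp add: successively_conv_sorted_wrt)
  note sorted_Xs = sorted_wrt_psubset_chainD(1)[OF sorted] and Xs = sorted_wrt_psubset_chainD(2)[OF sorted]
    and RU = sorted_wrt_psubset_chainD(3)[OF sorted]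
  then have "finite R" using finite_subset[of R ?U] by blast
  have A: "A \<in> set ?cs" and B: "B \<in> set ?cs" and "A \<subset> B"
    and gap: "\<forall>D\<in>set ?cs. \<not> (A \<subset> D \<and> D \<subset> B)"
    using step in_set_zip_tl_iff[OF sorted, of A B] by auto
  have closure: "X \<in> insert {} (insert ?U ?C)" if "X \<in> set ?cs" for X
    using that self_in_initial_segments[OF \<open>finite R\<close>] by (cases "R = {}") auto
  have proper: "?C \<subseteq> {A. A \<noteq> {} \<and> A \<subset> ?U}"
    using initial_segmentsD Xs RU by fast
  have chain: "\<forall>X\<in>?C. \<forall>Y\<in>?C. X \<subseteq> Y \<or> Y \<subseteq> X"
  proof (intro ballI)
    fix X Y assume "X \<in> ?C" "Y \<in> ?C"
    then show "X \<subseteq> Y \<or> Y \<subseteq> X"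
      using sorted_wrt_less_comparable[OF sorted_Xs, of X Y] initial_segments_comparable[of X R Y]
        initial_segmentsD[of X R] initial_segmentsD[of Y R] Xs[of X] Xs[of Y] by blast
  qed
  have gap': "\<forall>D\<in>?C. \<not> (A \<subset> D \<and> D \<subset> B)"
  proof
    fix D assume "D \<in> ?C"
    show "\<not> (A \<subset> D \<and> D \<subset> B)"
    proof (cases "D \<in> set Xs")
      case True
      then show ?thesis using gap by simp
    next
      case False
      then have "D \<subseteq> R" using \<open>D \<in> ?C\<close> initial_segmentsD by blast
      moreover have "R \<subseteq> A" using A Xs RU by auto
      ultimately show ?thesis by blast
    qed
  qed
  show ?thesis
    by (rule coloring_complexI[OF proper chain closure[OF A] closure[OF B] \<open>A \<subset> B\<close> gap' e])
qed

lemma coloring_complex_gap_above_initial_segments: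
  fixes R :: "nat set"
  assumes hyp: "hypergraph n E" and "finite R" and RU: "R \<subset> {1..n}"
    and above: "\<And>X. X \<in> Y \<Longrightarrow> R \<subset> X"
    and A: "A \<in> insert {} (insert {1..n} (initial_segments R \<union> Y))"
    and B: "B \<in> insert {} (insert {1..n} (initial_segments R \<union> Y))"
    and "A \<subset> B" and gap: "\<forall>D\<in>initial_segments R \<union> Y. \<not> (A \<subset> D \<and> D \<subset> B)"
    and e: "e \<in> E" "e \<subseteq> B - A"
  shows "A \<in> insert R (insert {1..n} Y)" and "B \<in> insert {1..n} Y"
proof -
  let ?U = "{1..n::nat}"
  obtain u w where "u \<in> e" "w \<in> e" "u \<noteq> w" using hypergraph_edge_two_elements[OF hyp e(1)] .
  have "\<not> B \<subseteq> R"
  proof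
    assume "B \<subseteq> R"
    then have "B \<notin> insert ?U Y" and "A \<notin> insert ?U Y"
      using \<open>A \<subset> B\<close> above RU by blast+
    then have "A \<in> insert {} (initial_segments R)" and "B \<in> initial_segments R"
      using A B \<open>A \<subset> B\<close> by blast+
    moreover have "\<forall>D\<in>initial_segments R. \<not> (A \<subset> D \<and> D \<subset> B)" using gap by blast
    ultimately have "u = w"
      by (rule initial_segments_gap_subsingleton) (use e \<open>u \<in> e\<close> \<open>w \<in> e\<close> in blast)+
    then show False using \<open>u \<noteq> w\<close> by blast
  qed
  then show B': "B \<in> insert ?U Y" using B initial_segmentsD by blast
  show "A \<in> insert R (insert ?U Y)"
  proof (cases "A \<subseteq> R")
    case True
    have "A = R"
    proof (rule ccontr)
      assume "A \<noteq> R"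
      with True have "A \<subset> R" by blast
      then have "R \<in> initial_segments R \<union> Y" using self_in_initial_segments[OF \<open>finite R\<close>] by blast
      moreover have "R \<subset> B" using B' above RU \<open>\<not> B \<subseteq> R\<close> by blast
      ultimately show False using gap \<open>A \<subset> R\<close> by blast
    qed
    then show ?thesis by simp
  next
    case False
    then show ?thesis using A initial_segmentsD by blast
  qed
qed

lemma refined_chain_in_link_coloring_complexI:
  fixes R :: "nat set"
  assumes "successively (\<subset>) (R # Xs @ [{1..n}])"
    and "(A, B) \<in> set (zip (R # Xs @ [{1..n}]) (Xs @ [{1..n}]))" and "e \<in> E" "e \<subseteq> B - A"
    and "G \<union> F = initial_segments R \<union> set Xs" and "G \<inter> F = {}"
  shows "G \<in> link (coloring_complex n E) F"
  using refined_chain_in_coloring_complexI[OF assms(1-4)] assms(5,6)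
  by (intro link_coloring_complexI) simp_all

lemma refined_chain_in_coloring_complexD:
  fixes R :: "nat set"
  assumes hyp: "hypergraph n E" and chain: "successively (\<subset>) (R # Xs @ [{1..n}])"
    and face: "initial_segments R \<union> set Xs \<in> coloring_complex n E"
  shows "\<exists>(A, B)\<in>set (zip (R # Xs @ [{1..n}]) (Xs @ [{1..n}])). \<exists>e\<in>E. e \<subseteq> B - A"
proof -
  let ?U = "{1..n::nat}" and ?cs = "R # Xs @ [{1..n}]"
  have sorted: "sorted_wrt (\<subset>) ?cs" using chain by (simp add: successively_conv_sorted_wrt)
  note Xs = sorted_wrt_psubset_chainD(2)[OF sorted] and RU = sorted_wrt_psubset_chainD(3)[OF sorted]
  then have "finite R" using finite_subset[of R ?U] by blast
  obtain A B e where A: "A \<in> insert {} (insert ?U (initial_segments R \<union> set Xs))"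
    and B: "B \<in> insert {} (insert ?U (initial_segments R \<union> set Xs))"
    and "A \<subset> B" and gap: "\<forall>D\<in>initial_segments R \<union> set Xs. \<not> (A \<subset> D \<and> D \<subset> B)"
    and e: "e \<in> E" "e \<subseteq> B - A"
    by (rule coloring_complexE[OF face])
  have "A \<in> insert R (insert ?U (set Xs))" and "B \<in> insert ?U (set Xs)"
    using coloring_complex_gap_above_initial_segments[OF hyp \<open>finite R\<close> RU _ A B \<open>A \<subset> B\<close> gap e] Xs
    by blast+
  then have A': "A \<in> set ?cs" and B': "B \<in> set ?cs" by auto
  have "\<not> (A \<subset> D \<and> D \<subset> B)" if D: "D \<in> set ?cs" for D
  proof -
    consider "D = R" | "D = ?U" | "D \<in> set Xs" using D by auto
    then show ?thesis
    proof cases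
      case 1
      have "R \<subseteq> A" using A' Xs RU by auto
      with 1 show ?thesis by blast
    next
      case 2
      have "B \<subseteq> ?U" using B' Xs RU by auto
      with 2 show ?thesis by blast
    next
      case 3
      then show ?thesis using gap by blast
    qed
  qed
  then have "(A, B) \<in> set (zip ?cs (tl ?cs))"
    unfolding in_set_zip_tl_iff[OF sorted] using A' B' \<open>A \<subset> B\<close> by blast
  then have "(A, B) \<in> set (zip ?cs (Xs @ [?U]))" by simp
  with e show ?thesis by blast
qed

lemma link_coloring_complex_vertex_psupset:
  assumes "finite R" and sub: "initial_segments R \<subseteq> F"
    and G: "G \<in> link (coloring_complex n E) F" and "S \<in> G"
  shows "R \<subset> S"
proof -
  have face: "G \<union> F \<in> coloring_complex n E" and "G \<inter> F = {}"
    using G unfolding link_def by auto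
  have "S \<noteq> {}" using coloring_complexD(1)[OF face] \<open>S \<in> G\<close> by blast
  moreover have "S \<notin> initial_segments R" using \<open>G \<inter> F = {}\<close> sub \<open>S \<in> G\<close> by blast
  moreover have "\<forall>X\<in>initial_segments R. S \<subseteq> X \<or> X \<subseteq> S"
    using coloring_complexD(2)[OF face] \<open>S \<in> G\<close> sub by blast
  ultimately have "R \<subseteq> S" by (rule superset_if_comparable_with_initial_segments[OF \<open>finite R\<close>])
  moreover have "R \<noteq> S"
    using \<open>S \<notin> initial_segments R\<close> \<open>S \<noteq> {}\<close> self_in_initial_segments[OF \<open>finite R\<close>] by blast
  ultimately show ?thesis by blast
qed

lemma link_coloring_complex_below_closed:
  fixes R P :: "nat set"
  assumes hyp: "hypergraph n E" and "R \<subset> P" and "P \<subset> {1..n}"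
    and lower: "P - R \<in> E" and upper: "{1..n} - P \<in> E"
    and G: "{y, z} \<in> link (coloring_complex n E) (initial_segments R \<union> {P})" and "y \<subset> P"
  shows "z \<subset> P"
proof (rule ccontr)
  let ?U = "{1..n::nat}" and ?F = "initial_segments R \<union> {P}"
  assume "\<not> z \<subset> P"
  have face: "{y, z} \<union> ?F \<in> coloring_complex n E" and disjoint: "{y, z} \<inter> ?F = {}"
    using G unfolding link_def by auto
  have "R \<subseteq> ?U" using \<open>R \<subset> P\<close> \<open>P \<subset> ?U\<close> by blast
  then have "finite R" by (rule finite_subset) simp
  have "R \<subset> y" and "R \<subset> z" using link_coloring_complex_vertex_psupset[OF \<open>finite R\<close> Un_upper1 G] by blast+
  have "z \<subseteq> P \<or> P \<subseteq> z" using coloring_complexD(2)[OF face] by blast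
  moreover have "z \<noteq> P" using disjoint by blast
  ultimately have "P \<subset> z" using \<open>\<not> z \<subset> P\<close> by blast
  have "z \<subset> ?U" using coloring_complexD(1)[OF face] by blast
  have chain: "successively (\<subset>) (R # [y, P, z] @ [?U])"
    using \<open>R \<subset> y\<close> \<open>y \<subset> P\<close> \<open>P \<subset> z\<close> \<open>z \<subset> ?U\<close> by simp
  have "{y, z} \<union> ?F = initial_segments R \<union> set [y, P, z]" by auto
  with face have "initial_segments R \<union> set [y, P, z] \<in> coloring_complex n E" by simp
  then have "\<exists>(A, B)\<in>set (zip (R # [y, P, z] @ [?U]) ([y, P, z] @ [?U])). \<exists>e\<in>E. e \<subseteq> B - A"
    by (rule refined_chain_in_coloring_complexD[OF hyp chain])
  then show False
    using no_edge_in_refinement_of_edge[OF hyp lower \<open>R \<subset> y\<close> \<open>y \<subset> P\<close>]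
      no_edge_in_refinement_of_edge[OF hyp upper \<open>P \<subset> z\<close> \<open>z \<subset> ?U\<close>] by auto
qed

lemma link_coloring_complex_isolated:
  fixes R v :: "nat set"
  assumes hyp: "hypergraph n E" and "R \<subset> v" and lower: "v - R \<in> E" and top: "{1..n} - v = {b}"
    and G: "{v, z} \<in> link (coloring_complex n E) (initial_segments R)"
  shows "z = v"
proof (rule ccontr)
  let ?U = "{1..n::nat}"
  assume "z \<noteq> v"
  have face: "{v, z} \<union> initial_segments R \<in> coloring_complex n E"
    using G unfolding link_def by auto
  have "v \<subset> ?U" and "z \<subset> ?U" using coloring_complexD(1)[OF face] by blast+
  then have "finite R" using \<open>R \<subset> v\<close> finite_subset[of R ?U] by blast
  have "R \<subset> z" using link_coloring_complex_vertex_psupset[OF \<open>finite R\<close> subset_refl G] by blast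
  have "z \<subseteq> v \<or> v \<subseteq> z" using coloring_complexD(2)[OF face] by blast
  moreover have "\<not> v \<subset> z"
  proof
    assume "v \<subset> z"
    then obtain p where "p \<in> z - v" by blast
    moreover obtain q where "q \<in> ?U - z" using \<open>z \<subset> ?U\<close> by blast
    ultimately have "p \<in> ?U - v" and "q \<in> ?U - v" and "p \<in> z" and "q \<notin> z"
      using \<open>v \<subset> z\<close> \<open>z \<subset> ?U\<close> by blast+
    then show False unfolding top by simp
  qed
  ultimately have "z \<subset> v" using \<open>z \<noteq> v\<close> by blast
  have chain: "successively (\<subset>) (R # [z, v] @ [?U])"
    using \<open>R \<subset> z\<close> \<open>z \<subset> v\<close> \<open>v \<subset> ?U\<close> by simp
  have "{v, z} \<union> initial_segments R = initial_segments R \<union> set [z, v]" by auto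
  with face have "initial_segments R \<union> set [z, v] \<in> coloring_complex n E" by simp
  then have "\<exists>(A, B)\<in>set (zip (R # [z, v] @ [?U]) ([z, v] @ [?U])). \<exists>e\<in>E. e \<subseteq> B - A"
    by (rule refined_chain_in_coloring_complexD[OF hyp chain])
  moreover have "\<not> e \<subseteq> ?U - v" if "e \<in> E" for e
    using hypergraph_edge_two_elements[OF hyp that] top by (metis singletonD subsetD)
  ultimately show False
    using no_edge_in_refinement_of_edge[OF hyp lower \<open>R \<subset> z\<close> \<open>z \<subset> v\<close>] by auto
qed

section \<open>Disconnected links\<close>

lemma obtain_chain_splitting_disjoint_edges:
  assumes hyp: "hypergraph n E" and g: "g \<in> E" and h: "h \<in> E" and disjoint: "g \<inter> h = {}"
    and large: "2 < card h"
  obtains R v P w w' :: "nat set"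
  where "R \<subset> v" "v \<subset> P" "P \<subset> w" "w \<subset> w'" "w' \<subset> {1..n}" "P - R = g" "{1..n} - P = h"
proof -
  let ?U = "{1..n}"
  define R where "R = ?U - (g \<union> h)"
  define P where "P = R \<union> g"
  obtain x x' where "x \<in> g" "x' \<in> g" "x \<noteq> x'" using hypergraph_edge_two_elements[OF hyp g] .
  obtain y where "y \<in> h" using hypergraph_edge_two_elements[OF hyp h] by metis
  obtain z y' where "z \<in> h" "y' \<in> h" "z \<noteq> y" "y' \<noteq> y" "z \<noteq> y'"
    using obtain_two_elements_besides[OF large \<open>y \<in> h\<close>] .
  have "g \<subseteq> ?U" and "h \<subseteq> ?U" using hypergraph_edge_subset[OF hyp] g h by auto
  then have "P - R = g" and "?U - P = h" and "g \<subseteq> P" and "R \<inter> g = {}" and "P \<inter> h = {}"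
    and "P \<subseteq> ?U"
    using disjoint unfolding P_def R_def by auto
  moreover have "R \<subset> R \<union> {x}" using \<open>x \<in> g\<close> \<open>R \<inter> g = {}\<close> by (intro psubset_witnessI[of _ _ x]) auto
  moreover have "R \<union> {x} \<subset> P" using \<open>x \<in> g\<close> \<open>x' \<in> g\<close> \<open>x \<noteq> x'\<close> \<open>g \<subseteq> P\<close> \<open>R \<inter> g = {}\<close>
    unfolding P_def by (intro psubset_witnessI[of _ _ x']) auto
  moreover have "P \<subset> P \<union> {y}" using \<open>y \<in> h\<close> \<open>P \<inter> h = {}\<close> by (intro psubset_witnessI[of _ _ y]) auto
  moreover have "P \<union> {y} \<subset> P \<union> {y, y'}" using \<open>y' \<in> h\<close> \<open>y' \<noteq> y\<close> \<open>P \<inter> h = {}\<close>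
    by (intro psubset_witnessI[of _ _ y']) auto
  moreover have "P \<union> {y, y'} \<subset> ?U"
    using \<open>y \<in> h\<close> \<open>y' \<in> h\<close> \<open>z \<in> h\<close> \<open>z \<noteq> y\<close> \<open>z \<noteq> y'\<close> \<open>P \<inter> h = {}\<close> \<open>P \<subseteq> ?U\<close> \<open>h \<subseteq> ?U\<close>
    by (intro psubset_witnessI[of _ _ z]) auto
  ultimately show thesis by (intro that) assumption+
qed

lemma not_cohen_macaulay_if_disjoint_edges:
  assumes hyp: "hypergraph n E" and g: "g \<in> E" and h: "h \<in> E" and "g \<inter> h = {}" and "2 < card h"
  shows "\<not> cohen_macaulay_over TYPE('k::field) (coloring_complex n E)"
proof -
  let ?U = "{1..n}" and ?K = "coloring_complex n E"
  obtain R v P w w' where "R \<subset> v" "v \<subset> P" "P \<subset> w" "w \<subset> w'" "w' \<subset> ?U"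
    and lower: "P - R = g" and upper: "?U - P = h"
    using obtain_chain_splitting_disjoint_edges[OF assms] .
  then have "R \<subset> P" and "P \<subset> ?U" by (meson psubset_trans)+
  define F where "F = initial_segments R \<union> {P}"
  have F: "F \<in> ?K"
    using refined_chain_in_coloring_complexI[where Xs = "[P]" and A = R and B = P and e = g]
      \<open>R \<subset> P\<close> \<open>P \<subset> ?U\<close> g lower by (simp add: F_def)
  have v: "{v} \<in> link ?K F"
    by (rule refined_chain_in_link_coloring_complexI[where Xs = "[v, P]" and A = P and B = ?U and e = h])
      (use \<open>R \<subset> v\<close> \<open>v \<subset> P\<close> \<open>P \<subset> ?U\<close> h upper initial_segmentsD[of v R] in \<open>auto simp: F_def\<close>)
  have w: "{w} \<in> link ?K F"
    by (rule refined_chain_in_link_coloring_complexI[where Xs = "[P, w]" and A = R and B = P and e = g])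
      (use \<open>R \<subset> P\<close> \<open>P \<subset> w\<close> \<open>w \<subset> w'\<close> \<open>w' \<subset> ?U\<close> g lower initial_segmentsD[of w R]
        in \<open>auto simp: F_def\<close>)
  have ww': "{w, w'} \<in> link ?K F"
    by (rule refined_chain_in_link_coloring_complexI[where Xs = "[P, w, w']" and A = R and B = P and e = g])
      (use \<open>R \<subset> P\<close> \<open>P \<subset> w\<close> \<open>w \<subset> w'\<close> \<open>w' \<subset> ?U\<close> g lower initial_segmentsD[of w R]
        initial_segmentsD[of w' R] in \<open>auto simp: F_def\<close>)
  have "P - R \<in> E" and "?U - P \<in> E" using lower upper g h by simp_all
  note closed = link_coloring_complex_below_closed[OF hyp \<open>R \<subset> P\<close> \<open>P \<subset> ?U\<close> this]
  show ?thesis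
  proof (rule not_cohen_macaulay_if_link_disconnected
      [where F = F and a = v and b = w and C = "{S. S \<subset> P}" and G = "{w, w'}"])
    show "\<And>y z. {y, z} \<in> link ?K F \<Longrightarrow> y \<noteq> z \<Longrightarrow> y \<in> {S. S \<subset> P} \<Longrightarrow> z \<in> {S. S \<subset> P}"
      using closed unfolding F_def by blast
  qed (use F v w ww' finite_Union_link_coloring_complex \<open>v \<subset> P\<close> \<open>P \<subset> w\<close> \<open>w \<subset> w'\<close> in auto)
qed

lemma obtain_chain_isolating_large_edge:
  assumes hyp: "hypergraph n E" and e: "e \<in> E" and large: "2 < card e"
    and f: "f \<in> E" and pair: "card f = 2" and meet: "e \<inter> f \<noteq> {}"
  obtains R v S T :: "nat set" and b :: nat
  where "R \<subset> v" "v \<subset> {1..n}" "v - R = e" "{1..n} - v = {b}" "R \<subset> S" "S \<subset> T" "T \<subset> {1..n}"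
    "f \<subseteq> {1..n} - T" "S \<noteq> v"
proof -
  let ?U = "{1..n}"
  obtain a b where "f = {a, b}" and "a \<in> e" and "b \<notin> e"
  proof -
    obtain a0 b0 where f_eq: "f = {a0, b0}" using pair by (meson card_2_iff)
    have "f \<noteq> e" using pair large by auto
    then have "\<not> f \<subseteq> e" using hypergraph_edge_not_psubset[OF hyp f e] by blast
    then consider "a0 \<in> e" "b0 \<notin> e" | "b0 \<in> e" "a0 \<notin> e" using meet f_eq by blast
    then show thesis
    proof cases
      case 1
      then show thesis using that f_eq by blast
    next
      case 2
      then show thesis using that[of b0 a0] f_eq by (simp add: insert_commute)
    qed
  qed
  obtain x x' where "x \<in> e" "x' \<in> e" "x \<noteq> a" "x' \<noteq> a" "x \<noteq> x'"
    using obtain_two_elements_besides[OF large \<open>a \<in> e\<close>] .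
  define R where "R = ?U - (e \<union> {b})"
  define T where "T = R \<union> {x, x'}"
  have "e \<subseteq> ?U" and "f \<subseteq> ?U" using hypergraph_edge_subset[OF hyp] e f by auto
  then have "(R \<union> e) - R = e" and "?U - (R \<union> e) = {b}" and "R \<inter> e = {}" and "b \<notin> R"
    and "R \<subseteq> ?U" and "b \<in> ?U"
    using \<open>f = {a, b}\<close> \<open>b \<notin> e\<close> unfolding R_def by auto
  moreover have "R \<subset> R \<union> e" using \<open>a \<in> e\<close> \<open>R \<inter> e = {}\<close> by (intro psubset_witnessI[of _ _ a]) auto
  moreover have "R \<union> e \<subset> ?U" using \<open>b \<in> ?U\<close> \<open>b \<notin> R\<close> \<open>b \<notin> e\<close> \<open>R \<subseteq> ?U\<close> \<open>e \<subseteq> ?U\<close>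
    by (intro psubset_witnessI[of _ _ b]) auto
  moreover have "R \<subset> R \<union> {x}" using \<open>x \<in> e\<close> \<open>R \<inter> e = {}\<close> by (intro psubset_witnessI[of _ _ x]) auto
  moreover have "R \<union> {x} \<subset> T" using \<open>x' \<in> e\<close> \<open>x \<noteq> x'\<close> \<open>R \<inter> e = {}\<close>
    unfolding T_def by (intro psubset_witnessI[of _ _ x']) auto
  moreover have "R \<union> {x} \<noteq> R \<union> e" using \<open>a \<in> e\<close> \<open>x \<noteq> a\<close> \<open>R \<inter> e = {}\<close> by blast
  moreover have "T \<subset> ?U" and "f \<subseteq> ?U - T"
  proof -
    have "a \<notin> T" using \<open>a \<in> e\<close> \<open>x \<noteq> a\<close> \<open>x' \<noteq> a\<close> \<open>R \<inter> e = {}\<close> unfolding T_def by auto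
    moreover have "b \<notin> T" using \<open>b \<notin> R\<close> \<open>b \<notin> e\<close> \<open>x \<in> e\<close> \<open>x' \<in> e\<close> unfolding T_def by auto
    moreover have "T \<subseteq> ?U" using \<open>R \<subseteq> ?U\<close> \<open>e \<subseteq> ?U\<close> \<open>x \<in> e\<close> \<open>x' \<in> e\<close> unfolding T_def by auto
    ultimately show "T \<subset> ?U" and "f \<subseteq> ?U - T"
      using \<open>f = {a, b}\<close> \<open>f \<subseteq> ?U\<close> by (auto intro: psubset_witnessI[of _ _ a])
  qed
  ultimately show thesis by (intro that) assumption+
qed

lemma not_cohen_macaulay_if_large_edge_meets_pair:
  assumes hyp: "hypergraph n E" and e: "e \<in> E" and "2 < card e"
    and f: "f \<in> E" and "card f = 2" and "e \<inter> f \<noteq> {}"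
  shows "\<not> cohen_macaulay_over TYPE('k::field) (coloring_complex n E)"
proof -
  let ?U = "{1..n}" and ?K = "coloring_complex n E"
  obtain R v S T b where "R \<subset> v" "v \<subset> ?U" and lower: "v - R = e" and top: "?U - v = {b}"
    and "R \<subset> S" "S \<subset> T" "T \<subset> ?U" "f \<subseteq> ?U - T" "S \<noteq> v"
    using obtain_chain_isolating_large_edge[OF assms] .
  have F: "initial_segments R \<in> ?K"
    using refined_chain_in_coloring_complexI[where Xs = "[]" and A = R and B = ?U and e = e]
      \<open>R \<subset> v\<close> \<open>v \<subset> ?U\<close> e lower by auto
  have v: "{v} \<in> link ?K (initial_segments R)"
    by (rule refined_chain_in_link_coloring_complexI[where Xs = "[v]" and A = R and B = v and e = e])
      (use \<open>R \<subset> v\<close> \<open>v \<subset> ?U\<close> e lower initial_segmentsD[of v R] in auto)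
  have S: "{S} \<in> link ?K (initial_segments R)"
    by (rule refined_chain_in_link_coloring_complexI[where Xs = "[S]" and A = S and B = ?U and e = f])
      (use \<open>R \<subset> S\<close> \<open>S \<subset> T\<close> \<open>T \<subset> ?U\<close> f \<open>f \<subseteq> ?U - T\<close> initial_segmentsD[of S R] in auto)
  have ST: "{S, T} \<in> link ?K (initial_segments R)"
    by (rule refined_chain_in_link_coloring_complexI[where Xs = "[S, T]" and A = T and B = ?U and e = f])
      (use \<open>R \<subset> S\<close> \<open>S \<subset> T\<close> \<open>T \<subset> ?U\<close> f \<open>f \<subseteq> ?U - T\<close> initial_segmentsD[of S R]
        initial_segmentsD[of T R] in auto)
  have "v - R \<in> E" using lower e by simp
  note isolated = link_coloring_complex_isolated[OF hyp \<open>R \<subset> v\<close> this top]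
  show ?thesis
  proof (rule not_cohen_macaulay_if_link_disconnected
      [where F = "initial_segments R" and a = v and b = S and C = "{v}" and G = "{S, T}"])
    show "\<And>y z. {y, z} \<in> link ?K (initial_segments R) \<Longrightarrow> y \<noteq> z \<Longrightarrow> y \<in> {v} \<Longrightarrow> z \<in> {v}"
      using isolated by blast
  qed (use F v S ST finite_Union_link_coloring_complex \<open>S \<subset> T\<close> \<open>S \<noteq> v\<close> in auto)
qed

theorem mainTheorem3:
  fixes n :: nat and E :: "nat set set"
  assumes "hypergraph n E"
    and "\<exists>e\<in>E. card e > 2"
    and "\<exists>e1\<in>E. \<exists>e2\<in>E. e1 \<inter> e2 = {}"
  shows "\<not> cohen_macaulay_over TYPE('k::field) (coloring_complex n E)"
proof -
  obtain e where e: "e \<in> E" "2 < card e" using assms(2) by blast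
  obtain e1 e2 where "e1 \<in> E" "e2 \<in> E" "e1 \<inter> e2 = {}" using assms(3) by blast
  show ?thesis
  proof (cases "\<exists>g\<in>E. \<exists>h\<in>E. g \<inter> h = {} \<and> 2 < card h")
    case True
    then show ?thesis using not_cohen_macaulay_if_disjoint_edges[OF assms(1)] by blast
  next
    case False
    then have "\<not> 2 < card e1" using \<open>e1 \<in> E\<close> \<open>e2 \<in> E\<close> \<open>e1 \<inter> e2 = {}\<close> by (metis inf_commute)
    then have "card e1 = 2" using hypergraph_card_edge_ge_2[OF assms(1) \<open>e1 \<in> E\<close>] by linarith
    moreover have "e \<inter> e1 \<noteq> {}" using False e \<open>e1 \<in> E\<close> by (metis inf_commute)
    ultimately show ?thesis
      using not_cohen_macaulay_if_large_edge_meets_pair[OF assms(1) e \<open>e1 \<in> E\<close>] by blast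
  qed
qed

end
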